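(* Let $A$ be a finite abelian group with at least $3$ elements and let $S_1,\ldots,S_k$ be a distinct difference system in $A$. Call a subset of $A$ a basis if it has $3$ elements and is not a translate of a subset of any $S_i$. This yields a simple rank $3$ $A$-invariant matroid structure on $A$.
   Context: Subsets $S_1,\ldots,S_k$ of an abelian group $A$ form a distinct difference system if: (i) for any $i,j$ and any $x,y \in S_i$, $z,w \in S_j$ with $x \neq y$ and $z \neq w$, the equation $x-y=z-w$ implies $x=z$ and $y=w$; (ii) each $S_i$ contains $0$ and at least one other element; (iii) $S_i \cap S_j = \{0\}$ for $i \neq j$. A translate of $T$ is a set $\{t+a : t\in T\}$, $a \in A$. $A$ acts on itself by translation; a matroid on $A$ is $A$-invariant if translates of bases are bases. A matroid is simple if every circuit has at least three elements. *)

theory Defs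
  imports Main
begin

definition translate :: "'a::ab_group_add set \<Rightarrow> 'a \<Rightarrow> 'a set" where
  "translate T a = (\<lambda>t. t + a) ` T"

definition distinct_difference_system :: "nat \<Rightarrow> (nat \<Rightarrow> 'a::ab_group_add set) \<Rightarrow> bool" where
  "distinct_difference_system k S \<longleftrightarrow>
     (\<forall>i\<in>{1..k}. \<forall>j\<in>{1..k}. \<forall>x\<in>S i. \<forall>y\<in>S i. \<forall>z\<in>S j. \<forall>w\<in>S j.
        x \<noteq> y \<and> z \<noteq> w \<and> x - y = z - w \<longrightarrow> x = z \<and> y = w) \<and>
     (\<forall>i\<in>{1..k}. 0 \<in> S i \<and> (\<exists>x\<in>S i. x \<noteq> 0)) \<and>
     (\<forall>i\<in>{1..k}. \<forall>j\<in>{1..k}. i \<noteq> j \<longrightarrow> S i \<inter> S j = {0})"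

definition matroid_bases :: "'a set \<Rightarrow> 'a set set \<Rightarrow> bool" where
  "matroid_bases E \<B> \<longleftrightarrow> finite E \<and> \<B> \<noteq> {} \<and> (\<forall>B\<in>\<B>. B \<subseteq> E) \<and>
     (\<forall>B1\<in>\<B>. \<forall>B2\<in>\<B>. \<forall>x\<in>B1 - B2. \<exists>y\<in>B2 - B1. insert y (B1 - {x}) \<in> \<B>)"

definition indep_of_bases :: "'a set set \<Rightarrow> 'a set \<Rightarrow> bool" where
  "indep_of_bases \<B> X \<longleftrightarrow> (\<exists>B\<in>\<B>. X \<subseteq> B)"

definition circuit_of_bases :: "'a set \<Rightarrow> 'a set set \<Rightarrow> 'a set \<Rightarrow> bool" where
  "circuit_of_bases E \<B> C \<longleftrightarrow> C \<subseteq> E \<and> \<not> indep_of_bases \<B> C \<and>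
     (\<forall>Y. Y \<subset> C \<longrightarrow> indep_of_bases \<B> Y)"

definition matroid_rank_is :: "'a set set \<Rightarrow> nat \<Rightarrow> bool" where
  "matroid_rank_is \<B> r \<longleftrightarrow> (\<forall>B\<in>\<B>. card B = r)"

definition simple_matroid :: "'a set \<Rightarrow> 'a set set \<Rightarrow> bool" where
  "simple_matroid E \<B> \<longleftrightarrow> (\<forall>C. circuit_of_bases E \<B> C \<longrightarrow> card C \<ge> 3)"

definition translation_invariant :: "'a::ab_group_add set set \<Rightarrow> bool" where
  "translation_invariant \<B> \<longleftrightarrow> (\<forall>B\<in>\<B>. \<forall>a. translate B a \<in> \<B>)"

end

theory Submission
  imports Defs
begin

(* Call the translates of the S_i lines.  Because all differences inside the S_i are distinct,
   two distinct points lie on at most one line, and no line is the whole group.  For any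
   family of lines with these two properties the 3-sets not contained in a line are the bases
   of a simple rank 3 matroid: the exchange axiom is checked by looking at whether the two
   points kept from the first basis lie on a common line. *)

definition noncollinear_triples :: "'a set \<Rightarrow> 'a set set \<Rightarrow> 'a set set" where
  "noncollinear_triples E \<L> = {B. B \<subseteq> E \<and> card B = 3 \<and> (\<forall>L\<in>\<L>. \<not> B \<subseteq> L)}"

locale line_system =
  fixes E :: "'a set" and \<L> :: "'a set set"
  assumes finite_E: "finite E"
    and three_le_card_E: "3 \<le> card E"
    and line_not_covers_E: "L \<in> \<L> \<Longrightarrow> \<not> E \<subseteq> L"
    and line_through_two_points_unique:
      "\<lbrakk>L \<in> \<L>; M \<in> \<L>; p \<noteq> q; p \<in> L; q \<in> L; p \<in> M; q \<in> M\<rbrakk> \<Longrightarrow> L = M"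
begin

lemma noncollinear_insert_off_line:
  assumes "L \<in> \<L>" "p \<noteq> q" "p \<in> L" "q \<in> L" "p \<in> E" "q \<in> E" "r \<in> E" "r \<notin> L"
  shows "{p, q, r} \<in> noncollinear_triples E \<L>"
proof -
  have "\<not> {p, q, r} \<subseteq> M" if "M \<in> \<L>" for M
    using line_through_two_points_unique[OF that assms(1,2)] assms(3,4,8) by auto
  moreover have "r \<noteq> p" "r \<noteq> q" using assms(3,4,8) by auto
  ultimately show ?thesis using assms(2,5-7) unfolding noncollinear_triples_def by auto
qed

lemma noncollinear_insert_off_pair:
  assumes "\<forall>L\<in>\<L>. \<not> {p, q} \<subseteq> L" "p \<noteq> q" "p \<in> E" "q \<in> E" "r \<in> E" "r \<notin> {p, q}"
  shows "{p, q, r} \<in> noncollinear_triples E \<L>"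
  using assms unfolding noncollinear_triples_def by auto

lemma pair_extends_to_noncollinear_triple:
  assumes "p \<noteq> q" "p \<in> E" "q \<in> E"
  obtains r where "{p, q, r} \<in> noncollinear_triples E \<L>"
proof (cases "\<exists>L\<in>\<L>. {p, q} \<subseteq> L")
  case True
  then obtain L where L: "L \<in> \<L>" "p \<in> L" "q \<in> L" by auto
  obtain r where "r \<in> E" "r \<notin> L"
    using line_not_covers_E[OF L(1)] by auto
  with L assms have "{p, q, r} \<in> noncollinear_triples E \<L>"
    by (intro noncollinear_insert_off_line)
  then show ?thesis by (rule that)
next
  case False
  have "card {p, q} < card E"
    using three_le_card_E by (simp add: card_insert_if)
  then have "\<not> E \<subseteq> {p, q}" using card_mono[of "{p, q}" E] by auto
  then obtain r where "r \<in> E" "r \<notin> {p, q}" by auto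
  with False assms have "{p, q, r} \<in> noncollinear_triples E \<L>"
    by (intro noncollinear_insert_off_pair) auto
  then show ?thesis by (rule that)
qed

lemma indep_if_card_le_2:
  assumes "C \<subseteq> E" "card C \<le> 2"
  shows "indep_of_bases (noncollinear_triples E \<L>) C"
proof -
  have "2 \<le> card E" using three_le_card_E by simp
  then obtain D where "C \<subseteq> D" "D \<subseteq> E" "card D = 2"
    using exists_subset_between[OF assms(2) _ assms(1) finite_E] by blast
  then obtain p q where "p \<noteq> q" "D = {p, q}" by (meson card_2_iff)
  moreover have "p \<in> E" "q \<in> E" using \<open>D \<subseteq> E\<close> \<open>D = {p, q}\<close> by auto
  ultimately obtain r where "{p, q, r} \<in> noncollinear_triples E \<L>"
    using pair_extends_to_noncollinear_triple by metis
  moreover have "C \<subseteq> {p, q, r}" using \<open>C \<subseteq> D\<close> \<open>D = {p, q}\<close> by auto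
  ultimately show ?thesis unfolding indep_of_bases_def by blast
qed

lemma noncollinear_triples_exchange:
  assumes B1: "B1 \<in> noncollinear_triples E \<L>" and B2: "B2 \<in> noncollinear_triples E \<L>"
    and x: "x \<in> B1 - B2"
  shows "\<exists>y\<in>B2 - B1. insert y (B1 - {x}) \<in> noncollinear_triples E \<L>"
proof -
  have "card (B1 - {x}) = 2" using B1 x by (simp add: noncollinear_triples_def)
  then obtain p q where pq: "p \<noteq> q" and B1x: "B1 - {x} = {p, q}" by (meson card_2_iff)
  have B1_eq: "B1 = {x, p, q}" using B1x x by blast
  have "B1 \<subseteq> E" "B2 \<subseteq> E" using B1 B2 by (simp_all add: noncollinear_triples_def)
  then have "p \<in> E" "q \<in> E" using B1_eq by auto
  obtain y where y: "y \<in> B2 - B1" "{p, q, y} \<in> noncollinear_triples E \<L>"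
  proof (cases "\<exists>L\<in>\<L>. {p, q} \<subseteq> L")
    case True
    then obtain L where L: "L \<in> \<L>" "p \<in> L" "q \<in> L" by auto
    obtain y where "y \<in> B2" "y \<notin> L"
      using B2 L(1) by (auto simp: noncollinear_triples_def)
    moreover have "y \<notin> B1" using B1_eq L x \<open>y \<in> B2\<close> \<open>y \<notin> L\<close> by auto
    ultimately show ?thesis
      using that noncollinear_insert_off_line[OF L(1) pq L(2,3) \<open>p \<in> E\<close> \<open>q \<in> E\<close>]
        \<open>B2 \<subseteq> E\<close> by blast
  next
    case False
    have "card B2 = card B1" "finite B1"
      using B1 B2 by (auto simp: noncollinear_triples_def card_ge_0_finite)
    then have "\<not> B2 \<subseteq> B1" using card_subset_eq x by blast
    then obtain y where "y \<in> B2 - B1" by blast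
    moreover have "y \<notin> {p, q}" using \<open>y \<in> B2 - B1\<close> B1_eq by auto
    ultimately show ?thesis
      using that noncollinear_insert_off_pair[OF _ pq \<open>p \<in> E\<close> \<open>q \<in> E\<close>] False
        \<open>B2 \<subseteq> E\<close> by blast
  qed
  moreover have "insert y (B1 - {x}) = {p, q, y}" using B1x by auto
  ultimately have "insert y (B1 - {x}) \<in> noncollinear_triples E \<L>" by simp
  with y(1) show ?thesis by blast
qed

lemma matroid_bases_noncollinear_triples: "matroid_bases E (noncollinear_triples E \<L>)"
proof -
  have "indep_of_bases (noncollinear_triples E \<L>) {}"
    using indep_if_card_le_2 by simp
  then have "noncollinear_triples E \<L> \<noteq> {}" by (auto simp: indep_of_bases_def)
  then show ?thesis
    using finite_E noncollinear_triples_exchange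
    unfolding matroid_bases_def by (auto simp: noncollinear_triples_def)
qed

lemma simple_matroid_noncollinear_triples: "simple_matroid E (noncollinear_triples E \<L>)"
  unfolding simple_matroid_def circuit_of_bases_def
proof (intro allI impI)
  fix C
  assume "C \<subseteq> E \<and> \<not> indep_of_bases (noncollinear_triples E \<L>) C \<and>
    (\<forall>Y\<subset>C. indep_of_bases (noncollinear_triples E \<L>) Y)"
  then show "3 \<le> card C" using indep_if_card_le_2[of C] by linarith
qed

end

lemma matroid_rank_is_noncollinear_triples: "matroid_rank_is (noncollinear_triples E \<L>) 3"
  by (simp add: matroid_rank_is_def noncollinear_triples_def)

lemma mem_translate: "p \<in> translate T a \<longleftrightarrow> p - a \<in> T"
  unfolding translate_def by (auto simp: image_iff) (metis diff_add_cancel)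

lemma translate_translate: "translate (translate T a) b = translate T (a + b)"
  unfolding translate_def image_image by (simp add: add.assoc)

lemma card_translate: "card (translate T a) = card T"
  unfolding translate_def by (simp add: card_image)

lemma translate_zero: "translate T 0 = T"
  by (simp add: translate_def)

lemma translate_subset_iff: "translate B c \<subseteq> L \<longleftrightarrow> B \<subseteq> translate L (- c)"
  unfolding subset_iff mem_translate by (metis add_diff_cancel diff_minus_eq_add)

lemma translation_invariant_noncollinear_triples:
  assumes "\<And>L a. L \<in> \<L> \<Longrightarrow> translate L a \<in> \<L>"
  shows "translation_invariant (noncollinear_triples UNIV \<L>)"
  using assms unfolding translation_invariant_def noncollinear_triples_def
  by (auto simp: card_translate translate_subset_iff)

lemma ex_subset_translate_iff: "(\<exists>T. T \<subseteq> S \<and> B = translate T a) \<longleftrightarrow> B \<subseteq> translate S a"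
proof
  assume "B \<subseteq> translate S a"
  then have "translate B (- a) \<subseteq> S" "B = translate (translate B (- a)) a"
    by (simp_all add: translate_subset_iff translate_translate translate_zero)
  then show "\<exists>T. T \<subseteq> S \<and> B = translate T a" by blast
qed (auto simp: translate_def)

definition dds_lines :: "nat \<Rightarrow> (nat \<Rightarrow> 'a::ab_group_add set) \<Rightarrow> 'a set set" where
  "dds_lines k S = {translate (S i) a | i a. i \<in> {1..k}}"

lemma translate_mem_dds_lines:
  assumes "L \<in> dds_lines k S"
  shows "translate L b \<in> dds_lines k S"
proof -
  obtain i a where "i \<in> {1..k}" "L = translate (S i) a"
    using assms by (auto simp: dds_lines_def)
  then have "i \<in> {1..k}" "translate L b = translate (S i) (a + b)"
    by (simp_all add: translate_translate)
  then show ?thesis unfolding dds_lines_def by blast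
qed

lemma dds_diff_eq_imp_eq:
  assumes "distinct_difference_system k S" "i \<in> {1..k}" "j \<in> {1..k}"
    and "x \<in> S i" "y \<in> S i" "z \<in> S j" "w \<in> S j" "x \<noteq> y" "x - y = z - w"
  shows "x = z \<and> y = w"
proof -
  have "z \<noteq> w" using assms(8,9) by auto
  with assms show ?thesis unfolding distinct_difference_system_def by blast
qed

lemma dds_inter_eq_zero:
  assumes "distinct_difference_system k S" "i \<in> {1..k}" "j \<in> {1..k}" "i \<noteq> j"
  shows "S i \<inter> S j = {0}"
  using assms unfolding distinct_difference_system_def by blast

lemma dds_line_through_two_points_unique:
  assumes dds: "distinct_difference_system k S"
    and "L \<in> dds_lines k S" "M \<in> dds_lines k S"
    and "p \<noteq> q" "p \<in> L" "q \<in> L" "p \<in> M" "q \<in> M"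
  shows "L = M"
proof -
  obtain i a j b where ij: "i \<in> {1..k}" "j \<in> {1..k}"
    and L: "L = translate (S i) a" and M: "M = translate (S j) b"
    using assms(2,3) by (auto simp: dds_lines_def)
  have mem: "p - a \<in> S i" "q - a \<in> S i" "p - b \<in> S j" "q - b \<in> S j"
    using assms(5-8) L M by (simp_all add: mem_translate)
  have "p - a \<noteq> q - a" "(p - a) - (q - a) = (p - b) - (q - b)" using \<open>p \<noteq> q\<close> by simp_all
  then have eq: "p - a = p - b" "q - a = q - b"
    using dds_diff_eq_imp_eq[OF dds ij mem] by simp_all
  have "i = j"
  proof (rule ccontr)
    assume "i \<noteq> j"
    have "p - a \<in> S i \<inter> S j" "q - a \<in> S i \<inter> S j" using mem eq by simp_all
    then have "p - a = 0" "q - a = 0"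
      using dds_inter_eq_zero[OF dds ij \<open>i \<noteq> j\<close>] by simp_all
    with \<open>p \<noteq> q\<close> show False by simp
  qed
  with eq L M show ?thesis by simp
qed

text \<open>With \<open>d \<noteq> 0\<close>, the differences \<open>d - 0\<close> and \<open>(d + d) - d\<close> coincide, so \<open>S i\<close> cannot
  contain \<open>0\<close>, \<open>d\<close> and \<open>d + d\<close>.\<close>
lemma dds_line_ne_UNIV:
  assumes dds: "distinct_difference_system k S" and "L \<in> dds_lines k S" and "(d::'a) \<noteq> 0"
  shows "L \<noteq> (UNIV :: 'a::ab_group_add set)"
proof
  assume "L = UNIV"
  obtain i a where i: "i \<in> {1..k}" and L: "L = translate (S i) a"
    using assms(2) by (auto simp: dds_lines_def)
  have "t \<in> S i" for t
    using mem_translate[of "t + a" "S i" a] \<open>L = UNIV\<close> L by simp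
  then have "d = d + d"
    using dds_diff_eq_imp_eq[OF dds i i, of d 0 "d + d" d] \<open>d \<noteq> 0\<close> by simp
  with \<open>d \<noteq> 0\<close> show False by simp
qed

theorem proposition3p24:
  fixes S :: "nat \<Rightarrow> 'a::{ab_group_add, finite} set" and k :: nat
  assumes "card (UNIV :: 'a set) \<ge> 3"
    and "distinct_difference_system k S"
  defines "\<B> \<equiv> {B :: 'a set. card B = 3 \<and>
             \<not> (\<exists>i\<in>{1..k}. \<exists>a. \<exists>T. T \<subseteq> S i \<and> B = translate T a)}"
  shows "matroid_bases UNIV \<B> \<and> matroid_rank_is \<B> 3 \<and> simple_matroid UNIV \<B>
         \<and> translation_invariant \<B>"
proof -
  have "\<not> UNIV \<subseteq> {0::'a}"
    using assms(1) card_mono[of "{0::'a}" UNIV] by auto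
  then obtain d :: 'a where "d \<noteq> 0" by auto
  interpret line_system UNIV "dds_lines k S"
  proof
    show "\<not> UNIV \<subseteq> L" if "L \<in> dds_lines k S" for L
      using dds_line_ne_UNIV[OF assms(2) that \<open>d \<noteq> 0\<close>] by auto
  qed (use assms dds_line_through_two_points_unique in simp_all)
  have "translation_invariant (noncollinear_triples UNIV (dds_lines k S))"
    by (rule translation_invariant_noncollinear_triples) (rule translate_mem_dds_lines)
  moreover have "\<B> = noncollinear_triples UNIV (dds_lines k S)"
    unfolding \<B>_def noncollinear_triples_def dds_lines_def ex_subset_translate_iff by blast
  ultimately show ?thesis
    using matroid_bases_noncollinear_triples matroid_rank_is_noncollinear_triples
      simple_matroid_noncollinear_triples by simp
qed

end
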